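(* Let $n\ge 6$ be even. (a) If $d_*$ and $d_*'$ are neighbors with $d_*\ne d_*'$, then $d_*$ and $d_*'$ are determined. (b) A Latin square $L$ of order $n$ with inner distance $\frac n2-1$ is a row product if and only if there exists $i\in[1,n-1]$ such that rows $i$ and $i+1$ of $L$ have the same difference row.
   Context: Symbols are $[1,n]$; $\mathrm{dist}(a,b)$ is the minimum of the residues of $a-b$ and $b-a$ mod $n$ (in $[0,n-1]$). A Latin row is a permutation $(s_1,\dots,s_n)$ of $[1,n]$; its inner distance is $\min_j\mathrm{dist}(s_j,s_{j+1})$; its difference row is $(h_1,\dots,h_{n-1})$ with $h_j\in[0,n-1]$, $h_j\equiv s_{j+1}-s_j\pmod n$, and its extended difference row is $d_*=(\epsilon_1,\dots,\epsilon_{n-1},h)$ with $\epsilon_j=h_j-\frac n2$ and $h=h_n-\frac n2$, where $h_n\in[0,n-1]$, $h_n\equiv s_1-s_n\pmod n$. A Latin rectangle is a matrix over $[1,n]$ with no repeats in rows or columns; its inner distance is the minimum of $\mathrm{dist}$ over symbols in horizontally or vertically adjacent cells. Two extended difference rows $d_*=(\epsilon_j)$ and $d_*'=(\epsilon'_j)$ of Latin rows of inner distance $\frac n2-1$ are neighbors if there are Latin rows $r,r'$ with these extended difference rows such that the $2\times n$ matrix with rows $r,r'$ is a Latin rectangle of inner distance $\frac n2-1$. They are determined if there exist $1\le j_1<j_2\le n$ with $\left|\sum_{j=j_1}^{j_2-1}(\epsilon'_j-\epsilon_j)\right|=2$. For a Latin square $L=(m_{i,j})$, $H$ is the $n\times(n-1)$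 matrix with $h_{i,j}\equiv m_{i,j+1}-m_{i,j}$ and $V$ the $(n-1)\times n$ matrix with $v_{i,j}\equiv m_{i+1,j}-m_{i,j}$ (mod $n$, in $[0,n-1]$). A row product is a Latin square obtained by adding a constant mod $n$ to all entries of $\mathrm{prod}(d,d')$, the $n\times n$ matrix with $1$ in cell $(1,1)$ whose $H$ has every row equal to a difference row $d$ and whose $V$ has every column equal to a difference row $d'$. *)

theory Defs
  imports Main
begin

text \<open>Symbols are 1..n; rows/matrices are functions with 1-based indices.
  Matrices M :: nat => nat => nat, entry M i j in row i, column j.\<close>

definition sdist :: "nat \<Rightarrow> nat \<Rightarrow> nat \<Rightarrow> nat" where
  "sdist n a b = nat (min ((int a - int b) mod int n) ((int b - int a) mod int n))"

definition latin_row :: "nat \<Rightarrow> (nat \<Rightarrow> nat) \<Rightarrow> bool" where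
  "latin_row n s \<longleftrightarrow> bij_betw s {1..n} {1..n}"

definition row_inner_dist :: "nat \<Rightarrow> (nat \<Rightarrow> nat) \<Rightarrow> nat" where
  "row_inner_dist n s = Min {sdist n (s j) (s (j+1)) | j. 1 \<le> j \<and> j \<le> n - 1}"

definition diff_row :: "nat \<Rightarrow> (nat \<Rightarrow> nat) \<Rightarrow> nat list" where
  "diff_row n s = map (\<lambda>j. nat ((int (s (j+1)) - int (s j)) mod int n)) [1..<n]"

text \<open>Extended difference row (eps_1,...,eps_{n-1},h) as a list of length n (n even).\<close>
definition ext_diff_row :: "nat \<Rightarrow> (nat \<Rightarrow> nat) \<Rightarrow> int list" where
  "ext_diff_row n s =
     map (\<lambda>j. (int (s (j+1)) - int (s j)) mod int n - int n div 2) [1..<n]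
     @ [(int (s 1) - int (s n)) mod int n - int n div 2]"

definition latin_rect :: "nat \<Rightarrow> nat \<Rightarrow> nat \<Rightarrow> (nat \<Rightarrow> nat \<Rightarrow> nat) \<Rightarrow> bool" where
  "latin_rect n m k M \<longleftrightarrow>
     (\<forall>i\<in>{1..m}. \<forall>j\<in>{1..k}. M i j \<in> {1..n}) \<and>
     (\<forall>i\<in>{1..m}. inj_on (M i) {1..k}) \<and>
     (\<forall>j\<in>{1..k}. inj_on (\<lambda>i. M i j) {1..m})"

definition rect_inner_dist :: "nat \<Rightarrow> nat \<Rightarrow> nat \<Rightarrow> (nat \<Rightarrow> nat \<Rightarrow> nat) \<Rightarrow> nat" where
  "rect_inner_dist n m k M = Min
     ({sdist n (M i j) (M i (j+1)) | i j. 1 \<le> i \<and> i \<le> m \<and> 1 \<le> j \<and> j < k} \<union>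
      {sdist n (M i j) (M (i+1) j) | i j. 1 \<le> i \<and> i < m \<and> 1 \<le> j \<and> j \<le> k})"

definition is_ext_diff_row_idist :: "nat \<Rightarrow> int list \<Rightarrow> bool" where
  "is_ext_diff_row_idist n d \<longleftrightarrow>
     (\<exists>r. latin_row n r \<and> row_inner_dist n r = n div 2 - 1 \<and> ext_diff_row n r = d)"

definition neighbors :: "nat \<Rightarrow> int list \<Rightarrow> int list \<Rightarrow> bool" where
  "neighbors n d d' \<longleftrightarrow>
     (\<exists>r r'. latin_row n r \<and> latin_row n r' \<and>
        ext_diff_row n r = d \<and> ext_diff_row n r' = d' \<and>
        latin_rect n 2 n (\<lambda>i j. if i = 1 then r j else r' j) \<and>
        rect_inner_dist n 2 n (\<lambda>i j. if i = 1 then r j else r' j) = n div 2 - 1)"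

definition determined :: "nat \<Rightarrow> int list \<Rightarrow> int list \<Rightarrow> bool" where
  "determined n d d' \<longleftrightarrow>
     (\<exists>j1 j2. 1 \<le> j1 \<and> j1 < j2 \<and> j2 \<le> n \<and>
        \<bar>\<Sum>j\<in>{j1..<j2}. d' ! (j - 1) - d ! (j - 1)\<bar> = 2)"

text \<open>prod(d,d') characterised as in the paper: the n x n matrix over 1..n with 1 in
  cell (1,1), every row of H equal to d and every column of V equal to d'.
  Column j of V is the difference row of column j of the matrix.\<close>
definition is_prod :: "nat \<Rightarrow> nat list \<Rightarrow> nat list \<Rightarrow> (nat \<Rightarrow> nat \<Rightarrow> nat) \<Rightarrow> bool" where
  "is_prod n d d' P \<longleftrightarrow>
     (\<forall>i\<in>{1..n}. \<forall>j\<in>{1..n}. P i j \<in> {1..n}) \<and> P 1 1 = 1 \<and>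
     (\<forall>i\<in>{1..n}. diff_row n (P i) = d) \<and>
     (\<forall>j\<in>{1..n}. diff_row n (\<lambda>i. P i j) = d')"

definition row_product :: "nat \<Rightarrow> (nat \<Rightarrow> nat \<Rightarrow> nat) \<Rightarrow> bool" where
  "row_product n L \<longleftrightarrow>
     (\<exists>d d' P c.
        (\<exists>r. latin_row n r \<and> diff_row n r = d) \<and>
        (\<exists>r'. latin_row n r' \<and> diff_row n r' = d') \<and>
        is_prod n d d' P \<and>
        latin_rect n n n L \<and>
        (\<forall>i\<in>{1..n}. \<forall>j\<in>{1..n}. L i j = (P i j + c - 1) mod n + 1))"

end

theory Submission
  imports Defs "HOL-Number_Theory.Cong"
begin

text \<open>Measure every step between symbols by its centred difference \<open>\<epsilon> = h - n/2\<close>; inner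
  distance \<open>n/2 - 1\<close> says exactly that all horizontal and vertical centred differences lie
  in \<open>{-1, 0, 1}\<close>. For two stacked rows with vertical centred differences \<open>\<delta>\<^sub>j\<close>, going
  around a unit square gives \<open>\<epsilon>'\<^sub>j - \<epsilon>\<^sub>j \<equiv> \<delta>\<^sub>j\<^sub>+\<^sub>1 - \<delta>\<^sub>j (mod n)\<close>, and smallness turns
  this into an equation, so partial sums of \<open>d' - d\<close> telescope to \<open>\<delta>\<^sub>j\<^sub>2 - \<delta>\<^sub>j\<^sub>1\<close>. As both rows
  are permutations, \<open>\<Sum> \<delta>\<^sub>j \<equiv> 0 (mod n)\<close>, so \<open>\<delta>\<close>, which is not constant because
  \<open>d \<noteq> d'\<close>, takes both values 1 and -1; this gives (a).

  For (b), let rows \<open>a, b\<close> be shifts of each other, i.e. with constant vertical \<open>\<delta> = \<gamma>\<close>, and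
  let \<open>s\<close> be the next row. The \<open>\<delta>\<close> between \<open>b\<close> and \<open>s\<close> never equals \<open>-\<gamma>\<close>, as otherwise
  a column of \<open>a, s\<close> would repeat a symbol. For \<open>\<gamma> = \<plusminus>1\<close> the sum argument makes it
  constant. For \<open>\<gamma> = 0\<close> it is \<open>\<plusminus>1\<close> everywhere; injectivity of \<open>s\<close> makes it depend only
  on the parity of the symbol of \<open>b\<close>, and if it were not constant we would get
  \<open>b\<^sub>i\<^sub>+\<^sub>2 \<equiv> b\<^sub>i + \<delta>\<^sub>i\<close> and \<open>\<delta>\<^sub>i\<^sub>+\<^sub>2 = -\<delta>\<^sub>i\<close>, whence \<open>b\<^sub>5 = b\<^sub>1\<close>. So one pair of equal adjacent
  difference rows makes all rows shifts of the first one, which is what a row product is.\<close>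

lemma eq_if_cong_abs_diff_less:
  fixes a b N :: int
  assumes "[a = b] (mod N)" "\<bar>a - b\<bar> < N"
  shows "a = b"
  using dvd_imp_le_int[of "a - b" N] assms by (auto simp: cong_iff_dvd_diff)

lemma eq_if_cong_atLeastAtMost:
  assumes "x \<in> {1..n}" "y \<in> {1..n}" "[int x = int y] (mod int n)"
  shows "x = y"
  using eq_if_cong_abs_diff_less[OF assms(3)] assms(1,2) by auto

lemma cong_shifted_symbol:
  assumes "1 \<le> x"
  shows "[int ((x + c - 1) mod n + 1) = int x + int c] (mod int n)"
  using assms by (simp add: cong_def zmod_int mod_simps)

lemma eq_if_two_valued_sum_cong_0:
  fixes f :: "'a \<Rightarrow> int"
  assumes "finite S" "\<forall>j\<in>S. f j = v \<or> f j = v + 1" "[sum f S = 0] (mod int (card S))"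
    and "j \<in> S" "k \<in> S"
  shows "f j = f k"
proof -
  define g where "g j = f j - v" for j
  have g: "\<forall>j\<in>S. 0 \<le> g j \<and> g j \<le> 1" using assms(2) by (auto simp: g_def)
  have "sum g S = sum f S - int (card S) * v" by (simp add: g_def sum_subtractf)
  then have "int (card S) dvd sum g S" using assms(3) by (simp add: cong_0_iff)
  moreover have "0 \<le> sum g S" using g by (simp add: sum_nonneg)
  moreover have "sum g S \<le> int (card S)" using g sum_mono[of S g "\<lambda>_. 1"] by simp
  ultimately have "sum g S = 0 \<or> sum g S = int (card S)"
    using dvd_imp_le_int[of "sum g S" "int (card S)"] by force
  then have "(\<forall>j\<in>S. g j = 0) \<or> (\<forall>j\<in>S. 1 - g j = 0)"
    using g assms(1) sum_nonneg_eq_0_iff[of S g] sum_nonneg_eq_0_iff[of S "\<lambda>j. 1 - g j"]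
    by (auto simp: sum_subtractf)
  then have "g j = g k" using assms(4,5) by auto
  then show ?thesis by (simp add: g_def)
qed

lemma step_two_invariant_even_diff:
  fixes P :: "int \<Rightarrow> bool"
  assumes "0 < H" and periodic: "\<And>x y. [x = y] (mod 2 * H) \<Longrightarrow> P x \<Longrightarrow> P y"
    and step: "\<And>x. P x \<Longrightarrow> P (x + 2)" and "even (y - x)" "P x"
  shows "P y"
proof -
  obtain t where t: "y = x + 2 * t" using \<open>even (y - x)\<close> by (metis evenE diff_add_cancel add.commute)
  have iterate: "P (x + 2 * int m)" for m
  proof (induction m)
    case 0
    show ?case using \<open>P x\<close> by simp
  next
    case (Suc m)
    then show ?case using step[of "x + 2 * int m"] by (simp add: algebra_simps)
  qed
  have "[2 * (t mod H) = 2 * t] (mod 2 * H)" by (simp add: cong_def mod_mult_mult1)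
  then have "[x + 2 * int (nat (t mod H)) = y] (mod 2 * H)"
    using \<open>0 < H\<close> by (simp add: t cong_add_lcancel)
  then show ?thesis using iterate periodic by blast
qed

lemma eq_if_bij_cong:
  assumes "bij_betw r {1..n} {1..n}" "j \<in> {1..n}" "k \<in> {1..n}"
    and "[int (r j) = int (r k)] (mod int n)"
  shows "j = k"
proof -
  have "r j \<in> {1..n}" "r k \<in> {1..n}" using assms(1-3) bij_betwE by blast+
  then have "r j = r k" using assms(4) by (rule eq_if_cong_atLeastAtMost)
  then show ?thesis using assms(1-3) bij_betw_imp_inj_on inj_onD by metis
qed

lemma bij_cong_surj:
  assumes "bij_betw r {1..n} {1..n}" "0 < n"
  obtains j where "j \<in> {1..n}" "[int (r j) = x] (mod int n)"
proof -
  define v where "v = nat ((x - 1) mod int n) + 1"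
  have "0 \<le> (x - 1) mod int n" "(x - 1) mod int n < int n" using assms(2) by simp_all
  then have "v \<in> {1..n}" by (auto simp: v_def nat_less_iff)
  then obtain j where "j \<in> {1..n}" "r j = v"
    using bij_betw_imp_surj_on[OF assms(1)] by (metis imageE)
  moreover have "[int v = x] (mod int n)" using assms(2) by (simp add: v_def cong_def mod_simps)
  ultimately show thesis using that by simp
qed

definition centered_diff :: "nat \<Rightarrow> nat \<Rightarrow> nat \<Rightarrow> int" where
  "centered_diff n x y = (int y - int x) mod int n - int n div 2"

lemma cong_centered_diff: "[centered_diff n x y = int y - int x - int n div 2] (mod int n)"
  by (simp add: centered_diff_def cong_def mod_simps)

lemma cong_add_centered_diff: "[int y = int x + int n div 2 + centered_diff n x y] (mod int n)"
  by (simp add: centered_diff_def cong_def mod_simps)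

lemma centered_diff_eq_if_cong:
  "[int y - int x = int y' - int x'] (mod int n) \<Longrightarrow> centered_diff n x y = centered_diff n x' y'"
  by (simp add: centered_diff_def cong_def)

lemma even_diff_iff_even_centered_diff:
  assumes "even n"
  shows "even (int y - int x) \<longleftrightarrow> even (int n div 2 + centered_diff n x y)"
proof -
  have "[int y - int x = int n div 2 + centered_diff n x y] (mod int n)"
    by (simp add: centered_diff_def cong_def)
  moreover have "2 dvd int n" using assms by simp
  ultimately have "[int y - int x = int n div 2 + centered_diff n x y] (mod 2)"
    by (rule cong_dvd_modulus)
  then show ?thesis by (rule cong_dvd_iff)
qed

lemma sdist_sym: "sdist n x y = sdist n y x"
  by (simp add: sdist_def min.commute)

lemma abs_centered_diff_le_1:
  assumes "4 \<le> n" "even n" "n div 2 - 1 \<le> sdist n x y"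
  shows "\<bar>centered_diff n x y\<bar> \<le> 1"
proof -
  define m where "m = (int y - int x) mod int n"
  have m: "0 \<le> m" "m < int n" using assms(1) by (simp_all add: m_def)
  have "(int x - int y) mod int n = (if m = 0 then 0 else int n - m)"
    unfolding m_def by (metis minus_diff_eq zmod_zminus1_eq_if)
  moreover have "int (n div 2) - 1 \<le> int (sdist n x y)"
    using assms(1,3) by linarith
  ultimately have "int n div 2 - 1 \<le> min (if m = 0 then 0 else int n - m) m"
    using m by (simp add: sdist_def m_def[symmetric] zdiv_int split: if_splits)
  moreover have "int n = 2 * (int n div 2)" using assms(2) by simp
  ultimately show ?thesis
    using m assms(1) by (auto simp: centered_diff_def m_def[symmetric] split: if_splits)
qed

lemma centered_diff_square:
  assumes "4 < n"
    and "\<bar>centered_diff n x y\<bar> \<le> 1" "\<bar>centered_diff n x' y'\<bar> \<le> 1"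
    and "\<bar>centered_diff n x x'\<bar> \<le> 1" "\<bar>centered_diff n y y'\<bar> \<le> 1"
  shows "centered_diff n x' y' - centered_diff n x y = centered_diff n y y' - centered_diff n x x'"
proof (rule eq_if_cong_abs_diff_less)
  have "[centered_diff n x' y' - centered_diff n x y
      = (int y' - int x' - int n div 2) - (int y - int x - int n div 2)] (mod int n)"
    by (intro cong_diff cong_centered_diff)
  moreover have "[centered_diff n y y' - centered_diff n x x'
      = (int y' - int y - int n div 2) - (int x' - int x - int n div 2)] (mod int n)"
    by (intro cong_diff cong_centered_diff)
  ultimately show "[centered_diff n x' y' - centered_diff n x y
      = centered_diff n y y' - centered_diff n x x'] (mod int n)"
    by (simp add: cong_def algebra_simps)
  show "\<bar>centered_diff n x' y' - centered_diff n x y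
      - (centered_diff n y y' - centered_diff n x x')\<bar> < int n"
    using assms by linarith
qed

lemma sum_centered_diff_cong_0:
  assumes "bij_betw a {1..n} {1..n}" "bij_betw b {1..n} {1..n}" "even n"
  shows "[\<Sum>j=1..n. centered_diff n (a j) (b j) = 0] (mod int n)"
proof -
  have "[\<Sum>j=1..n. centered_diff n (a j) (b j)
      = \<Sum>j=1..n. int (b j) - int (a j) - int n div 2] (mod int n)"
    by (intro cong_sum cong_centered_diff)
  also have "(\<Sum>j=1..n. int (b j) - int (a j) - int n div 2) = - int n * (int n div 2)"
    using sum.reindex_bij_betw[OF assms(1), of int] sum.reindex_bij_betw[OF assms(2), of int]
    by (simp add: sum_subtractf)
  also have "[- int n * (int n div 2) = 0] (mod int n)"
    by (simp add: cong_0_iff)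
  finally show ?thesis .
qed

lemma mod_diff_eq_if_cong_shift:
  assumes "[int (b j) = int (a j) + c] (mod int n)" "[int (b k) = int (a k) + c] (mod int n)"
  shows "(int (b k) - int (b j)) mod int n = (int (a k) - int (a j)) mod int n"
  using cong_diff[OF assms(2,1)] by (simp add: cong_def)

lemma diff_row_eq_if_cong_shift:
  assumes "\<forall>j\<in>{1..n}. [int (b j) = int (a j) + c] (mod int n)"
  shows "diff_row n a = diff_row n b"
  unfolding diff_row_def
proof (rule map_cong[OF refl])
  fix j assume "j \<in> set [1..<n]"
  then have "j \<in> {1..n}" "j + 1 \<in> {1..n}" by auto
  then show "nat ((int (a (j + 1)) - int (a j)) mod int n) = nat ((int (b (j + 1)) - int (b j)) mod int n)"
    using assms mod_diff_eq_if_cong_shift[of b j a c n "j + 1"] by simp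
qed

lemma ext_diff_row_eq_if_cong_shift:
  assumes "\<forall>j\<in>{1..n}. [int (b j) = int (a j) + c] (mod int n)" "1 \<le> n"
  shows "ext_diff_row n a = ext_diff_row n b"
proof -
  have shift: "(int (b k) - int (b j)) mod int n = (int (a k) - int (a j)) mod int n"
    if "j \<in> {1..n}" "k \<in> {1..n}" for j k
    using assms(1) that by (intro mod_diff_eq_if_cong_shift[of b j a c n k]) auto
  have "map (\<lambda>j. (int (a (j + 1)) - int (a j)) mod int n - int n div 2) [1..<n]
      = map (\<lambda>j. (int (b (j + 1)) - int (b j)) mod int n - int n div 2) [1..<n]"
    using shift by (intro map_cong) auto
  moreover have "(int (a 1) - int (a n)) mod int n = (int (b 1) - int (b n)) mod int n"
    using shift assms(2) by simp
  ultimately show ?thesis unfolding ext_diff_row_def by simp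
qed

lemma nth_diff_row:
  assumes "1 \<le> j" "j < n"
  shows "diff_row n a ! (j - 1) = nat ((int (a (j + 1)) - int (a j)) mod int n)"
proof -
  have "[1..<n] ! (j - 1) = j" using assms by simp
  then show ?thesis using assms by (simp add: diff_row_def)
qed

lemma nth_ext_diff_row:
  assumes "1 \<le> j" "j < n"
  shows "ext_diff_row n a ! (j - 1) = centered_diff n (a j) (a (j + 1))"
  using assms by (simp add: ext_diff_row_def centered_diff_def nth_append)

lemma cong_shift_if_diff_row_eq:
  assumes "diff_row n a = diff_row n b" "j \<in> {1..n}"
  shows "[int (b j) = int (a j) + (int (b 1) - int (a 1))] (mod int n)"
proof -
  have "1 \<le> j" "j \<le> n" using assms(2) by auto
  then show ?thesis
  proof (induction j rule: dec_induct)
    case base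
    show ?case by simp
  next
    case (step k)
    have same_step: "(int (a (k + 1)) - int (a k)) mod int n = (int (b (k + 1)) - int (b k)) mod int n"
      using step nth_diff_row[of k n a] nth_diff_row[of k n b] assms(1) by (simp add: eq_nat_nat_iff)
    have "[int (b (k + 1)) = int (b k) + (int (b (k + 1)) - int (b k))] (mod int n)"
      by simp
    also have "[int (b k) + (int (b (k + 1)) - int (b k))
        = int (b k) + (int (a (k + 1)) - int (a k))] (mod int n)"
      using same_step by (intro cong_add) (simp_all add: cong_def)
    also have "[int (b k) + (int (a (k + 1)) - int (a k))
        = int (a k) + (int (b 1) - int (a 1)) + (int (a (k + 1)) - int (a k))] (mod int n)"
      using step by (intro cong_add) auto
    finally show ?case by (simp add: algebra_simps)
  qed
qed

text \<open>Rows \<open>r\<close> above \<open>s\<close> of a \<open>2 \<times> n\<close> Latin rectangle of inner distance \<open>n/2 - 1\<close>.\<close>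

locale far_rows =
  fixes n :: nat and r s :: "nat \<Rightarrow> nat"
  assumes six_le: "6 \<le> n" and even_n: "even n"
    and bij_r: "bij_betw r {1..n} {1..n}" and bij_s: "bij_betw s {1..n} {1..n}"
    and far_r: "j \<in> {1..<n} \<Longrightarrow> \<bar>centered_diff n (r j) (r (j + 1))\<bar> \<le> 1"
    and far_s: "j \<in> {1..<n} \<Longrightarrow> \<bar>centered_diff n (s j) (s (j + 1))\<bar> \<le> 1"
    and far_rs: "j \<in> {1..n} \<Longrightarrow> \<bar>centered_diff n (r j) (s j)\<bar> \<le> 1"
begin

abbreviation vdiff :: "nat \<Rightarrow> int" where
  "vdiff j \<equiv> centered_diff n (r j) (s j)"

lemma vdiff_step:
  assumes "j \<in> {1..<n}"
  shows "centered_diff n (s j) (s (j + 1)) - centered_diff n (r j) (r (j + 1)) = vdiff (j + 1) - vdiff j"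
  using assms six_le by (intro centered_diff_square far_r far_s far_rs) auto

lemma vdiff_eq_if_two_valued:
  assumes "\<forall>j\<in>{1..n}. vdiff j = v \<or> vdiff j = v + 1" "j \<in> {1..n}"
  shows "vdiff j = vdiff 1"
proof -
  have "[\<Sum>j=1..n. vdiff j = 0] (mod int (card {1..n}))"
    using sum_centered_diff_cong_0[OF bij_r bij_s even_n] by simp
  then show ?thesis
    using assms six_le by (intro eq_if_two_valued_sum_cong_0[of "{1..n}"]) auto
qed

lemma cong_shift_if_vdiff_const:
  assumes "\<forall>j\<in>{1..n}. vdiff j = vdiff 1"
  shows "\<forall>j\<in>{1..n}. [int (s j) = int (r j) + (int n div 2 + vdiff 1)] (mod int n)"
proof
  fix j assume "j \<in> {1..n}"
  then have "vdiff j = vdiff 1" using assms by blast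
  then show "[int (s j) = int (r j) + (int n div 2 + vdiff 1)] (mod int n)"
    using cong_add_centered_diff[of "s j" "r j" n] by (simp add: add.assoc)
qed

lemma sum_ext_diff_row_diff:
  assumes "1 \<le> j1" "j1 \<le> j2" "j2 \<le> n"
  shows "(\<Sum>j\<in>{j1..<j2}. ext_diff_row n s ! (j - 1) - ext_diff_row n r ! (j - 1))
      = vdiff j2 - vdiff j1"
proof -
  have "(\<Sum>j\<in>{j1..<j2}. ext_diff_row n s ! (j - 1) - ext_diff_row n r ! (j - 1))
      = (\<Sum>j\<in>{j1..<j2}. vdiff (Suc j) - vdiff j)"
  proof (rule sum.cong)
    fix j assume "j \<in> {j1..<j2}"
    then have "1 \<le> j" "j < n" using assms by auto
    then show "ext_diff_row n s ! (j - 1) - ext_diff_row n r ! (j - 1) = vdiff (Suc j) - vdiff j"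
      using nth_ext_diff_row[of j n s] nth_ext_diff_row[of j n r] vdiff_step[of j] by simp
  qed simp
  also have "\<dots> = vdiff j2 - vdiff j1" using assms(2) by (rule sum_Suc_diff')
  finally show ?thesis .
qed

lemma vdiff_not_const_if_ext_diff_row_ne:
  assumes "ext_diff_row n r \<noteq> ext_diff_row n s"
  shows "\<exists>j\<in>{1..n}. vdiff j \<noteq> vdiff 1"
proof (rule ccontr)
  assume "\<not> ?thesis"
  then have "\<forall>j\<in>{1..n}. [int (s j) = int (r j) + (int n div 2 + vdiff 1)] (mod int n)"
    by (intro cong_shift_if_vdiff_const) blast
  then have "ext_diff_row n r = ext_diff_row n s"
    using six_le by (intro ext_diff_row_eq_if_cong_shift) auto
  with assms show False ..
qed

lemma vdiff_takes_1_and_minus_1: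
  assumes "\<exists>j\<in>{1..n}. vdiff j \<noteq> vdiff 1"
  shows "\<exists>p\<in>{1..n}. vdiff p = 1" and "\<exists>q\<in>{1..n}. vdiff q = -1"
proof -
  show "\<exists>p\<in>{1..n}. vdiff p = 1"
  proof (rule ccontr)
    assume "\<not> ?thesis"
    then have "\<forall>j\<in>{1..n}. vdiff j = -1 \<or> vdiff j = -1 + 1" using far_rs by force
    then show False using assms vdiff_eq_if_two_valued by blast
  qed
  show "\<exists>q\<in>{1..n}. vdiff q = -1"
  proof (rule ccontr)
    assume "\<not> ?thesis"
    then have "\<forall>j\<in>{1..n}. vdiff j = 0 \<or> vdiff j = 0 + 1" using far_rs by force
    then show False using assms vdiff_eq_if_two_valued by blast
  qed
qed

lemma determined_if_ext_diff_row_ne: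
  assumes "ext_diff_row n r \<noteq> ext_diff_row n s"
  shows "determined n (ext_diff_row n r) (ext_diff_row n s)"
proof -
  obtain p q where pq: "p \<in> {1..n}" "q \<in> {1..n}" "vdiff p = 1" "vdiff q = -1"
    using vdiff_takes_1_and_minus_1[OF vdiff_not_const_if_ext_diff_row_ne[OF assms]] by blast
  then have "p < q \<or> q < p" by (metis linorder_neqE_nat one_neq_neg_one)
  then show ?thesis
  proof
    assume "p < q"
    then show ?thesis
      unfolding determined_def using sum_ext_diff_row_diff[of p q] pq by (intro exI[of _ p] exI[of _ q]) auto
  next
    assume "q < p"
    then show ?thesis
      unfolding determined_def using sum_ext_diff_row_diff[of q p] pq by (intro exI[of _ q] exI[of _ p]) auto
  qed
qed

end

locale nearly_antipodal_rows = far_rows +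
  assumes abs_vdiff_eq_1: "j \<in> {1..n} \<Longrightarrow> \<bar>centered_diff n (r j) (s j)\<bar> = 1"
begin

lemma vdiff_cases: "j \<in> {1..n} \<Longrightarrow> vdiff j = 1 \<or> vdiff j = -1"
  using abs_vdiff_eq_1[of j] by linarith

lemma vdiff_eq_1_if_cong_add_2:
  assumes "j \<in> {1..n}" "k \<in> {1..n}" "[int (r k) = int (r j) + 2] (mod int n)" "vdiff j = 1"
  shows "vdiff k = 1"
proof (rule ccontr)
  assume "vdiff k \<noteq> 1"
  then have "vdiff k = -1" using vdiff_cases assms(2) by blast
  have "[int (s k) = int (r k) + int n div 2 + vdiff k] (mod int n)"
    by (rule cong_add_centered_diff)
  also have "[int (r k) + int n div 2 + vdiff k = int (r j) + 2 + int n div 2 + vdiff k] (mod int n)"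
    using assms(3) by (intro cong_add) auto
  also have "int (r j) + 2 + int n div 2 + vdiff k = int (r j) + int n div 2 + vdiff j"
    using \<open>vdiff k = -1\<close> assms(4) by simp
  also have "[\<dots> = int (s j)] (mod int n)"
    using cong_add_centered_diff[of "s j" "r j" n] by (rule cong_sym)
  finally have "k = j" using eq_if_bij_cong[OF bij_s assms(2,1)] by blast
  then have "[int (r j) + 2 = int (r j) + 0] (mod int n)" using assms(3) by (simp add: cong_sym_eq)
  then have "[2 = 0] (mod int n)" by (simp only: cong_add_lcancel)
  then have "int n dvd 2" by (simp add: cong_0_iff)
  then show False using six_le zdvd_imp_le[of "int n" 2] by simp
qed

text \<open>The symbols of \<open>r\<close> at which \<open>\<delta> = 1\<close> form a set closed under \<open>x \<mapsto> x + 2 (mod n)\<close>,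
  hence a union of parity classes.\<close>

lemma vdiff_eq_if_even_diff:
  assumes "j \<in> {1..n}" "k \<in> {1..n}" "even (int (r k) - int (r j))"
  shows "vdiff k = vdiff j"
proof -
  define P where "P x \<longleftrightarrow> (\<forall>i\<in>{1..n}. [int (r i) = x] (mod int n) \<longrightarrow> vdiff i = 1)" for x
  have P_iff: "P (int (r i)) \<longleftrightarrow> vdiff i = 1" if "i \<in> {1..n}" for i
    using that eq_if_bij_cong[OF bij_r] cong_refl unfolding P_def by blast
  have periodic: "P y" if "[x = y] (mod 2 * (int n div 2))" "P x" for x y
  proof -
    have "[x = y] (mod int n)" using that(1) even_n by simp
    then show ?thesis using that(2) unfolding P_def by (metis cong_sym cong_trans)
  qed
  have step: "P (x + 2)" if "P x" for x
    unfolding P_def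
  proof (intro ballI impI)
    fix k assume k: "k \<in> {1..n}" "[int (r k) = x + 2] (mod int n)"
    have "0 < n" using six_le by simp
    then obtain j where j: "j \<in> {1..n}" "[int (r j) = x] (mod int n)"
      using bij_cong_surj[OF bij_r] by blast
    have "[int (r k) = int (r j) + 2] (mod int n)"
      using k(2) cong_add[OF cong_sym[OF j(2)] cong_refl[of 2]] by (rule cong_trans)
    moreover have "vdiff j = 1" using that j unfolding P_def by blast
    ultimately show "vdiff k = 1" using j(1) k(1) by (rule vdiff_eq_1_if_cong_add_2[rotated 2])
  qed
  have "0 < int n div 2" using six_le by simp
  then have "P (int (r j)) \<longleftrightarrow> P (int (r k))"
    using step_two_invariant_even_diff[of "int n div 2" P] periodic step assms(3)
    by (metis even_minus minus_diff_eq)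
  then show ?thesis using P_iff assms(1,2) vdiff_cases by metis
qed

lemma centered_diff_eq_if_vdiff_flips:
  assumes "j \<in> {1..<n}" "vdiff (j + 1) \<noteq> vdiff j"
  shows "centered_diff n (r j) (r (j + 1)) = vdiff j"
proof -
  have "j \<in> {1..n}" "j + 1 \<in> {1..n}" using assms(1) by auto
  then have "vdiff j = 1 \<or> vdiff j = -1" "vdiff (j + 1) = 1 \<or> vdiff (j + 1) = -1"
    using vdiff_cases by blast+
  then show ?thesis
    using vdiff_step[OF assms(1)] far_r[OF assms(1)] far_s[OF assms(1)] assms(2)
    by (auto simp: abs_le_iff)
qed

context
  fixes j0 :: nat
  assumes j0: "j0 \<in> {1..n}" and not_const: "vdiff j0 \<noteq> vdiff 1"
begin

lemma vdiff_eq_iff_even_diff: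
  assumes "j \<in> {1..n}" "k \<in> {1..n}"
  shows "vdiff k = vdiff j \<longleftrightarrow> even (int (r k) - int (r j))"
proof
  show "even (int (r k) - int (r j)) \<Longrightarrow> vdiff k = vdiff j"
    using assms by (rule vdiff_eq_if_even_diff)
next
  assume eq: "vdiff k = vdiff j"
  show "even (int (r k) - int (r j))"
  proof (rule ccontr)
    assume odd_kj: "odd (int (r k) - int (r j))"
    have one: "1 \<in> {1..n}" using six_le by simp
    have odd_j0: "odd (int (r j0) - int (r 1))"
      using vdiff_eq_if_even_diff[OF one j0] not_const by blast
    have "even (int (r j) - int (r 1)) \<or> even (int (r j) - int (r j0))"
      using odd_j0 by presburger
    then consider "even (int (r j) - int (r 1))" | "even (int (r j) - int (r j0))" by blast
    then show False
    proof cases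
      case 1
      then have "even (int (r k) - int (r j0))" using odd_kj odd_j0 by presburger
      then show False
        using vdiff_eq_if_even_diff[OF one assms(1) 1] vdiff_eq_if_even_diff[OF j0 assms(2)]
          not_const eq
        by simp
    next
      case 2
      then have "even (int (r k) - int (r 1))" using odd_kj odd_j0 by presburger
      then show False
        using vdiff_eq_if_even_diff[OF j0 assms(1) 2] vdiff_eq_if_even_diff[OF one assms(2)]
          not_const eq
        by simp
    qed
  qed
qed

lemma even_half: "even (int n div 2)"
proof -
  have "\<exists>i\<in>{1..<n}. vdiff (i + 1) \<noteq> vdiff i"
  proof (rule ccontr)
    assume no_flip: "\<not> ?thesis"
    have "vdiff (Suc i) = vdiff 1" if "Suc i \<le> n" for i
      using that
    proof (induction i)
      case (Suc i)
      then have "Suc i \<in> {1..<n}" by simp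
      then have "vdiff (Suc i + 1) = vdiff (Suc i)" using no_flip by blast
      then show ?case using Suc by simp
    qed simp
    moreover have "Suc (j0 - 1) = j0" "Suc (j0 - 1) \<le> n" using j0 by auto
    ultimately show False using not_const by metis
  qed
  then obtain i where i: "i \<in> {1..<n}" "vdiff (i + 1) \<noteq> vdiff i" by blast
  then have "i \<in> {1..n}" "i + 1 \<in> {1..n}" by auto
  then have "odd (int (r (i + 1)) - int (r i))"
    using vdiff_eq_iff_even_diff i(2) by simp
  then have "odd (int n div 2 + vdiff i)"
    using even_diff_iff_even_centered_diff[OF even_n, of "r (i + 1)" "r i"]
      centered_diff_eq_if_vdiff_flips[OF i] by simp
  moreover have "odd (vdiff i)" using vdiff_cases[OF \<open>i \<in> {1..n}\<close>] by auto
  ultimately show ?thesis by simp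
qed

lemma centered_diff_r_eq:
  assumes "i \<in> {1..<n}"
  shows "centered_diff n (r i) (r (i + 1)) = (if vdiff (i + 1) = vdiff i then 0 else vdiff i)"
proof (cases "vdiff (i + 1) = vdiff i")
  case True
  have "i \<in> {1..n}" "i + 1 \<in> {1..n}" using assms by auto
  then have "even (int (r (i + 1)) - int (r i))"
    using vdiff_eq_iff_even_diff True by simp
  then have "even (centered_diff n (r i) (r (i + 1)))"
    using even_diff_iff_even_centered_diff[OF even_n, of "r (i + 1)" "r i"] even_half by simp
  then show ?thesis using True far_r[OF assms] by (auto simp: abs_le_iff)
next
  case False
  then show ?thesis using centered_diff_eq_if_vdiff_flips[OF assms] by simp
qed

lemma cong_r_add_2:
  assumes "1 \<le> i" "i + 2 \<le> n"
  shows "[int (r (i + 2)) = int (r i) + vdiff i] (mod int n) \<and> vdiff (i + 2) = - vdiff i"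
proof -
  let ?e = "\<lambda>k. centered_diff n (r k) (r (k + 1))"
  have i: "i \<in> {1..<n}" "i + 1 \<in> {1..<n}" "i \<in> {1..n}" "i + 1 \<in> {1..n}" "i + 2 \<in> {1..n}"
    using assms by auto
  have "i + 1 + 1 = i + 2" by simp
  then have "[int (r (i + 2)) = int (r (i + 1)) + int n div 2 + ?e (i + 1)] (mod int n)"
    using cong_add_centered_diff[of "r (i + 1 + 1)" "r (i + 1)" n] by simp
  also have "[int (r (i + 1)) + int n div 2 + ?e (i + 1)
      = int (r i) + int n div 2 + ?e i + int n div 2 + ?e (i + 1)] (mod int n)"
    by (intro cong_add cong_refl cong_add_centered_diff)
  also have "int (r i) + int n div 2 + ?e i + int n div 2 + ?e (i + 1)
      = int (r i) + (?e i + ?e (i + 1)) + int n"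
    using even_n by simp
  also have "[\<dots> = int (r i) + (?e i + ?e (i + 1))] (mod int n)"
    by (simp add: cong_def)
  finally have two_steps: "[int (r (i + 2)) = int (r i) + (?e i + ?e (i + 1))] (mod int n)" .
  have "?e i + ?e (i + 1) \<noteq> 0"
  proof
    assume "?e i + ?e (i + 1) = 0"
    then have "[int (r (i + 2)) = int (r i)] (mod int n)" using two_steps by simp
    then have "i + 2 = i" using eq_if_bij_cong[OF bij_r] i by blast
    then show False by simp
  qed
  moreover have "?e i = (if vdiff (i + 1) = vdiff i then 0 else vdiff i)"
    "?e (i + 1) = (if vdiff (i + 2) = vdiff (i + 1) then 0 else vdiff (i + 1))"
    using centered_diff_r_eq i \<open>i + 1 + 1 = i + 2\<close> by metis+
  moreover have "vdiff i = 1 \<or> vdiff i = -1" "vdiff (i + 1) = 1 \<or> vdiff (i + 1) = -1"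
    "vdiff (i + 2) = 1 \<or> vdiff (i + 2) = -1"
    using vdiff_cases i by blast+
  ultimately have "?e i + ?e (i + 1) = vdiff i \<and> vdiff (i + 2) = - vdiff i"
    by auto
  then show ?thesis using two_steps by simp
qed

end

lemma vdiff_const:
  assumes "j \<in> {1..n}"
  shows "vdiff j = vdiff 1"
proof (rule ccontr)
  assume "vdiff j \<noteq> vdiff 1"
  note cong_r_add_2 = cong_r_add_2[OF assms this]
  have r3: "[int (r 3) = int (r 1) + vdiff 1] (mod int n)" and v3: "vdiff 3 = - vdiff 1"
    using cong_r_add_2[of 1] six_le by (simp_all add: numeral_3_eq_3)
  have "[int (r 5) = int (r 3) + vdiff 3] (mod int n)"
    using cong_r_add_2[of 3] six_le by simp
  also have "[int (r 3) + vdiff 3 = int (r 1) + vdiff 1 + vdiff 3] (mod int n)"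
    using r3 by (intro cong_add cong_refl)
  also have "int (r 1) + vdiff 1 + vdiff 3 = int (r 1)"
    using v3 by simp
  finally have "5 = (1::nat)" using eq_if_bij_cong[OF bij_r, of 5 1] six_le by simp
  then show False by simp
qed

end

lemma (in far_rows) vdiff_const_if_ne_uminus:
  assumes "\<bar>\<gamma>\<bar> \<le> 1" "\<forall>i\<in>{1..n}. vdiff i \<noteq> - \<gamma>" "j \<in> {1..n}"
  shows "vdiff j = vdiff 1"
proof -
  consider "\<gamma> = 1" | "\<gamma> = -1" | "\<gamma> = 0" using assms(1) by linarith
  then show ?thesis
  proof cases
    case 1
    then have "vdiff i = 0 \<or> vdiff i = 0 + 1" if "i \<in> {1..n}" for i
      using far_rs[OF that] bspec[OF assms(2) that] by auto
    then show ?thesis using assms(3) by (intro vdiff_eq_if_two_valued[where v = 0]) auto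
  next
    case 2
    then have "vdiff i = -1 \<or> vdiff i = -1 + 1" if "i \<in> {1..n}" for i
      using far_rs[OF that] bspec[OF assms(2) that] by auto
    then show ?thesis using assms(3) by (intro vdiff_eq_if_two_valued[where v = "-1"]) auto
  next
    case 3
    then have "\<bar>vdiff i\<bar> = 1" if "i \<in> {1..n}" for i
      using far_rs[OF that] bspec[OF assms(2) that] by auto
    then interpret nearly_antipodal_rows n r s
      by unfold_locales auto
    show ?thesis using assms(3) by (rule vdiff_const)
  qed
qed

lemma diff_row_eq_propagates:
  assumes "far_rows n b s" and a_range: "\<forall>j\<in>{1..n}. a j \<in> {1..n}"
    and "diff_row n a = diff_row n b"
    and far_ab: "\<forall>j\<in>{1..n}. \<bar>centered_diff n (a j) (b j)\<bar> \<le> 1"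
    and "\<forall>j\<in>{1..n}. s j \<noteq> a j"
  shows "diff_row n b = diff_row n s"
proof -
  interpret far_rows n b s by fact
  define \<gamma> where "\<gamma> = centered_diff n (a 1) (b 1)"
  have \<gamma>: "centered_diff n (a j) (b j) = \<gamma>" if "j \<in> {1..n}" for j
  proof -
    have "[int (b j) - int (a j) = int (a j) + (int (b 1) - int (a 1)) - int (a j)] (mod int n)"
      using cong_shift_if_diff_row_eq[OF assms(3) that] by (intro cong_diff cong_refl)
    then show ?thesis unfolding \<gamma>_def by (intro centered_diff_eq_if_cong) simp
  qed
  have "vdiff j \<noteq> - \<gamma>" if "j \<in> {1..n}" for j
  proof
    assume "vdiff j = - \<gamma>"
    have "[int (s j) = int (b j) + int n div 2 + vdiff j] (mod int n)"
      by (rule cong_add_centered_diff)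
    also have "[int (b j) + int n div 2 + vdiff j
        = int (a j) + int n div 2 + \<gamma> + int n div 2 + vdiff j] (mod int n)"
      using cong_add_centered_diff[of "b j" "a j" n] \<gamma>[OF that] by (intro cong_add cong_refl) simp
    also have "int (a j) + int n div 2 + \<gamma> + int n div 2 + vdiff j = int (a j) + int n"
      using \<open>vdiff j = - \<gamma>\<close> even_n by simp
    also have "[int (a j) + int n = int (a j)] (mod int n)"
      by (simp add: cong_def)
    finally have "s j = a j"
      using that a_range bij_betwE[OF bij_s] by (intro eq_if_cong_atLeastAtMost) auto
    with assms(5) that show False by blast
  qed
  moreover have "\<bar>\<gamma>\<bar> \<le> 1" using far_ab six_le by (simp add: \<gamma>_def)
  ultimately have "\<forall>j\<in>{1..n}. vdiff j = vdiff 1"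
    using vdiff_const_if_ne_uminus by blast
  then have "\<forall>j\<in>{1..n}. [int (s j) = int (b j) + (int n div 2 + vdiff 1)] (mod int n)"
    by (rule cong_shift_if_vdiff_const)
  then show ?thesis by (rule diff_row_eq_if_cong_shift)
qed

lemma
  shows rect_inner_dist_le_horiz:
      "i \<in> {1..m} \<Longrightarrow> j \<in> {1..<k} \<Longrightarrow> rect_inner_dist n m k M \<le> sdist n (M i j) (M i (j + 1))"
    and rect_inner_dist_le_vert:
      "i \<in> {1..<m} \<Longrightarrow> j \<in> {1..k} \<Longrightarrow> rect_inner_dist n m k M \<le> sdist n (M i j) (M (i + 1) j)"
proof -
  let ?H = "{sdist n (M i j) (M i (j + 1)) | i j. 1 \<le> i \<and> i \<le> m \<and> 1 \<le> j \<and> j < k}"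
  let ?V = "{sdist n (M i j) (M (i + 1) j) | i j. 1 \<le> i \<and> i < m \<and> 1 \<le> j \<and> j \<le> k}"
  have "?H = (\<lambda>(i, j). sdist n (M i j) (M i (j + 1))) ` ({1..m} \<times> {1..<k})"
    "?V = (\<lambda>(i, j). sdist n (M i j) (M (i + 1) j)) ` ({1..<m} \<times> {1..k})"
    by fastforce+
  then have "finite (?H \<union> ?V)" by simp
  then show "i \<in> {1..m} \<Longrightarrow> j \<in> {1..<k} \<Longrightarrow> rect_inner_dist n m k M \<le> sdist n (M i j) (M i (j + 1))"
    and "i \<in> {1..<m} \<Longrightarrow> j \<in> {1..k} \<Longrightarrow> rect_inner_dist n m k M \<le> sdist n (M i j) (M (i + 1) j)"
    unfolding rect_inner_dist_def by (auto intro!: Min_le)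
qed

lemma bij_betw_row_if_latin_rect:
  assumes "latin_rect n m n M" "i \<in> {1..m}"
  shows "bij_betw (M i) {1..n} {1..n}"
proof -
  have "inj_on (M i) {1..n}" "M i ` {1..n} \<subseteq> {1..n}"
    using assms unfolding latin_rect_def by auto
  then show ?thesis by (simp add: bij_betw_def endo_inj_surj)
qed

lemma bij_betw_column_if_latin_rect:
  assumes "latin_rect n n k M" "j \<in> {1..k}"
  shows "bij_betw (\<lambda>i. M i j) {1..n} {1..n}"
proof -
  have "inj_on (\<lambda>i. M i j) {1..n}" "(\<lambda>i. M i j) ` {1..n} \<subseteq> {1..n}"
    using assms unfolding latin_rect_def by auto
  then show ?thesis by (simp add: bij_betw_def endo_inj_surj)
qed
lemma far_rows_if_adjacent_rows:
  assumes "6 \<le> n" "even n" "latin_rect n m n M" "rect_inner_dist n m n M = n div 2 - 1"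
    and "i \<in> {1..m}" "i' \<in> {1..m}" "i' = i + 1 \<or> i = i' + 1"
  shows "far_rows n (M i) (M i')"
proof
  have far: "n div 2 - 1 \<le> sdist n x y \<Longrightarrow> \<bar>centered_diff n x y\<bar> \<le> 1" for x y
    using assms(1,2) by (intro abs_centered_diff_le_1) auto
  show "6 \<le> n" "even n" by fact+
  show "bij_betw (M i) {1..n} {1..n}" "bij_betw (M i') {1..n} {1..n}"
    using bij_betw_row_if_latin_rect[OF assms(3)] assms(5,6) by blast+
  show "\<bar>centered_diff n (M i j) (M i (j + 1))\<bar> \<le> 1"
    and "\<bar>centered_diff n (M i' j) (M i' (j + 1))\<bar> \<le> 1" if "j \<in> {1..<n}" for j
    using that assms(4,5,6) rect_inner_dist_le_horiz[of i m j n n M] rect_inner_dist_le_horiz[of i' m j n n M]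
    by (auto intro!: far)
  show "\<bar>centered_diff n (M i j) (M i' j)\<bar> \<le> 1" if "j \<in> {1..n}" for j
    using assms(7)
  proof
    assume "i' = i + 1"
    then show ?thesis
      using that assms(4-6) rect_inner_dist_le_vert[of i m j n n M] by (auto intro!: far)
  next
    assume "i = i' + 1"
    then show ?thesis
      using that assms(4-6) rect_inner_dist_le_vert[of i' m j n n M] by (auto intro!: far simp: sdist_sym)
  qed
qed

lemma determined_if_neighbors:
  assumes "6 \<le> n" "even n" "neighbors n d d'" "d \<noteq> d'"
  shows "determined n d d'"
proof -
  obtain r r' where rows: "ext_diff_row n r = d" "ext_diff_row n r' = d'"
    and M: "latin_rect n 2 n (\<lambda>i j. if i = 1 then r j else r' j)"
      "rect_inner_dist n 2 n (\<lambda>i j. if i = 1 then r j else r' j) = n div 2 - 1"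
    using assms(3) unfolding neighbors_def by blast
  have "far_rows n r r'"
    using far_rows_if_adjacent_rows[OF assms(1,2) M, of 1 2] by simp
  then show ?thesis
    using far_rows.determined_if_ext_diff_row_ne rows assms(4) by blast
qed

lemma latin_square_diff_row_eq_propagates:
  assumes n: "6 \<le> n" "even n" and L: "latin_rect n n n L" "rect_inner_dist n n n L = n div 2 - 1"
    and "diff_row n (L a) = diff_row n (L b)" "a \<in> {1..n}" "b \<in> {1..n}" "s \<in> {1..n}"
    and "b = a + 1 \<and> s = b + 1 \<or> a = b + 1 \<and> b = s + 1"
  shows "diff_row n (L b) = diff_row n (L s)"
proof (rule diff_row_eq_propagates)
  have "s = b + 1 \<or> b = s + 1" using assms(9) by auto
  then show "far_rows n (L b) (L s)" by (rule far_rows_if_adjacent_rows[OF n L assms(7,8)])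
  have "b = a + 1 \<or> a = b + 1" using assms(9) by auto
  then have "far_rows n (L a) (L b)" by (rule far_rows_if_adjacent_rows[OF n L assms(6,7)])
  then show "\<forall>j\<in>{1..n}. \<bar>centered_diff n (L a j) (L b j)\<bar> \<le> 1" using far_rows.far_rs by blast
  show "\<forall>j\<in>{1..n}. L a j \<in> {1..n}" using L(1) assms(6) unfolding latin_rect_def by blast
  have "s \<noteq> a" using assms(9) by auto
  show "\<forall>j\<in>{1..n}. L s j \<noteq> L a j"
  proof
    fix j assume "j \<in> {1..n}"
    then have "inj_on (\<lambda>i. L i j) {1..n}" using L(1) unfolding latin_rect_def by blast
    then show "L s j \<noteq> L a j" using \<open>s \<noteq> a\<close> assms(6,8) by (auto dest: inj_onD)
  qed
qed fact

lemma diff_rows_eq_if_adjacent_rows_eq: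
  assumes n: "6 \<le> n" "even n" and L: "latin_rect n n n L" "rect_inner_dist n n n L = n div 2 - 1"
    and i0: "i0 \<in> {1..n - 1}" "diff_row n (L i0) = diff_row n (L (i0 + 1))"
    and "k \<in> {1..n}"
  shows "diff_row n (L k) = diff_row n (L 1)"
proof -
  note propagate = latin_square_diff_row_eq_propagates[OF n L]
  let ?R = "\<lambda>i. diff_row n (L i) = diff_row n (L (i + 1))"
  have forward: "?R (i0 + t)" if "i0 + t \<le> n - 1" for t
    using that
  proof (induction t)
    case (Suc t)
    then have "diff_row n (L (i0 + t)) = diff_row n (L (i0 + t + 1))" by simp
    then have "diff_row n (L (i0 + t + 1)) = diff_row n (L (i0 + t + 2))"
      by (rule propagate) (use Suc.prems i0(1) in auto)
    then show ?case by simp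
  qed (use i0 in simp)
  have backward: "?R (i0 - t)" if "t < i0" for t
    using that
  proof (induction t)
    case (Suc t)
    then have "diff_row n (L (i0 - t + 1)) = diff_row n (L (i0 - t))" by simp
    then have "diff_row n (L (i0 - t)) = diff_row n (L (i0 - Suc t))"
      by (rule propagate) (use Suc.prems i0(1) in auto)
    moreover have "i0 - t = i0 - Suc t + 1" using Suc.prems by simp
    ultimately show ?case by simp
  qed (use i0 in simp)
  have R: "?R i" if "i \<in> {1..n - 1}" for i
    using forward[of "i - i0"] backward[of "i0 - i"] that i0(1) by (cases "i0 \<le> i") auto
  have from_first: "diff_row n (L (Suc t)) = diff_row n (L 1)" if "Suc t \<le> n" for t
    using that
  proof (induction t)
    case (Suc t)
    then show ?case using R[of "Suc t"] by simp
  qed simp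
  obtain t where "k = Suc t" using \<open>k \<in> {1..n}\<close> by (cases k) auto
  then show ?thesis using from_first[of t] \<open>k \<in> {1..n}\<close> by simp
qed

lemma diff_rows_eq_if_row_product:
  assumes "row_product n L" "i \<in> {1..n}"
  shows "diff_row n (L i) = diff_row n (L 1)"
proof -
  obtain d d' P c where P: "is_prod n d d' P"
    and L: "\<forall>i\<in>{1..n}. \<forall>j\<in>{1..n}. L i j = (P i j + c - 1) mod n + 1"
    using assms(1) unfolding row_product_def by blast
  have "diff_row n (L i) = d" if i: "i \<in> {1..n}" for i
  proof -
    have "\<forall>j\<in>{1..n}. [int (L i j) = int (P i j) + int c] (mod int n)"
    proof
      fix j assume "j \<in> {1..n}"
      moreover have "P i j \<in> {1..n}" using P i \<open>j \<in> {1..n}\<close> unfolding is_prod_def by blast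
      ultimately show "[int (L i j) = int (P i j) + int c] (mod int n)"
        using L i cong_shifted_symbol[of "P i j" c n] by simp
    qed
    then have "diff_row n (P i) = diff_row n (L i)" by (rule diff_row_eq_if_cong_shift)
    then show ?thesis using P i unfolding is_prod_def by simp
  qed
  then show ?thesis using assms(2) by fastforce
qed

text \<open>\<open>L\<close> shifted by a constant so that cell \<open>(1, 1)\<close> holds 1: the matrix \<open>prod(d, d')\<close> of
  a square all of whose rows have the same difference row.\<close>

definition normalized_square :: "nat \<Rightarrow> (nat \<Rightarrow> nat \<Rightarrow> nat) \<Rightarrow> nat \<Rightarrow> nat \<Rightarrow> nat" where
  "normalized_square n L i j = nat ((int (L i j) - int (L 1 1)) mod int n) + 1"

lemma normalized_square_range: "0 < n \<Longrightarrow> normalized_square n L i j \<in> {1..n}"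
proof -
  assume "0 < n"
  then have "0 \<le> (int (L i j) - int (L 1 1)) mod int n" "(int (L i j) - int (L 1 1)) mod int n < int n"
    by simp_all
  then show ?thesis by (auto simp: normalized_square_def nat_less_iff)
qed

lemma cong_normalized_square:
  "0 < n \<Longrightarrow> [int (normalized_square n L i j) = int (L i j) + (1 - int (L 1 1))] (mod int n)"
  by (simp add: normalized_square_def cong_def mod_simps algebra_simps)

lemma is_prod_normalized_square:
  assumes eq: "\<forall>i\<in>{1..n}. diff_row n (L i) = diff_row n (L 1)" and "0 < n"
  shows "is_prod n (diff_row n (L 1)) (diff_row n (\<lambda>i. L i 1)) (normalized_square n L)"
proof -
  let ?P = "normalized_square n L"
  note P_cong = cong_normalized_square[OF \<open>0 < n\<close>]
  have rows: "diff_row n (?P i) = diff_row n (L 1)" if "i \<in> {1..n}" for i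
  proof -
    have "diff_row n (L i) = diff_row n (?P i)"
      using P_cong by (intro diff_row_eq_if_cong_shift[where c = "1 - int (L 1 1)"]) blast
    then show ?thesis using eq[rule_format, OF that] by simp
  qed
  have columns: "diff_row n (\<lambda>i. ?P i j) = diff_row n (\<lambda>i. L i 1)" if "j \<in> {1..n}" for j
  proof (rule sym, rule diff_row_eq_if_cong_shift, intro ballI)
    fix i assume "i \<in> {1..n}"
    have "[int (?P i j) = int (L i j) + (1 - int (L 1 1))] (mod int n)" by (rule P_cong)
    also have "[int (L i j) + (1 - int (L 1 1))
        = int (L 1 j) + (int (L i 1) - int (L 1 1)) + (1 - int (L 1 1))] (mod int n)"
      using cong_shift_if_diff_row_eq[OF sym[OF eq[rule_format, OF \<open>i \<in> {1..n}\<close>]] that]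
      by (intro cong_add cong_refl)
    also have "int (L 1 j) + (int (L i 1) - int (L 1 1)) + (1 - int (L 1 1))
        = int (L i 1) + (int (L 1 j) - 2 * int (L 1 1) + 1)"
      by simp
    finally show "[int (?P i j) = int (L i 1) + (int (L 1 j) - 2 * int (L 1 1) + 1)] (mod int n)" .
  qed
  show ?thesis
    unfolding is_prod_def using normalized_square_range[OF \<open>0 < n\<close>] rows columns
    by (simp add: normalized_square_def)
qed

lemma eq_normalized_square_shift:
  assumes "latin_rect n n n L" "i \<in> {1..n}" "j \<in> {1..n}"
  shows "L i j = (normalized_square n L i j + (L 1 1 - 1) - 1) mod n + 1"
proof (rule eq_if_cong_atLeastAtMost)
  have "0 < n" using assms(2) by simp
  have L_range: "L i j \<in> {1..n}" "L 1 1 \<in> {1..n}"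
    using assms \<open>0 < n\<close> unfolding latin_rect_def by auto
  then show "L i j \<in> {1..n}" by simp
  show "(normalized_square n L i j + (L 1 1 - 1) - 1) mod n + 1 \<in> {1..n}"
    using \<open>0 < n\<close> by (simp add: Suc_le_eq)
  have "[int ((normalized_square n L i j + (L 1 1 - 1) - 1) mod n + 1)
      = int (normalized_square n L i j) + int (L 1 1 - 1)] (mod int n)"
    using normalized_square_range[OF \<open>0 < n\<close>] by (intro cong_shifted_symbol) auto
  also have "int (normalized_square n L i j) + int (L 1 1 - 1)
      = int (normalized_square n L i j) - (1 - int (L 1 1))"
    using L_range by simp
  also have "[int (normalized_square n L i j) - (1 - int (L 1 1)) = int (L i j)] (mod int n)"
    using cong_diff[OF cong_normalized_square[OF \<open>0 < n\<close>, of L i j] cong_refl[of "1 - int (L 1 1)"]]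
    by simp
  finally show "[int (L i j) = int ((normalized_square n L i j + (L 1 1 - 1) - 1) mod n + 1)] (mod int n)"
    by (rule cong_sym)
qed

lemma row_product_if_diff_rows_eq:
  assumes L: "latin_rect n n n L" and eq: "\<forall>i\<in>{1..n}. diff_row n (L i) = diff_row n (L 1)"
    and "0 < n"
  shows "row_product n L"
  unfolding row_product_def
proof (rule exI[of _ "diff_row n (L 1)"], rule exI[of _ "diff_row n (\<lambda>i. L i 1)"],
    rule exI[of _ "normalized_square n L"], rule exI[of _ "L 1 1 - 1"], intro conjI)
  have one: "1 \<in> {1..n}" using \<open>0 < n\<close> by simp
  show "\<exists>r. latin_row n r \<and> diff_row n r = diff_row n (L 1)"
    using bij_betw_row_if_latin_rect[OF L one] unfolding latin_row_def by blast
  show "\<exists>r. latin_row n r \<and> diff_row n r = diff_row n (\<lambda>i. L i 1)"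
    using bij_betw_column_if_latin_rect[OF L one] unfolding latin_row_def by blast
  show "is_prod n (diff_row n (L 1)) (diff_row n (\<lambda>i. L i 1)) (normalized_square n L)"
    using eq \<open>0 < n\<close> by (rule is_prod_normalized_square)
  show "\<forall>i\<in>{1..n}. \<forall>j\<in>{1..n}. L i j = (normalized_square n L i j + (L 1 1 - 1) - 1) mod n + 1"
    using eq_normalized_square_shift[OF L] by blast
qed fact

lemma row_product_iff_adjacent_diff_rows_eq:
  assumes "6 \<le> n" "even n" "latin_rect n n n L" "rect_inner_dist n n n L = n div 2 - 1"
  shows "row_product n L \<longleftrightarrow> (\<exists>i\<in>{1..n - 1}. diff_row n (L i) = diff_row n (L (i + 1)))"
proof
  assume "row_product n L"
  then have "diff_row n (L 1) = diff_row n (L (1 + 1))"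
    using diff_rows_eq_if_row_product[of n L 2] assms(1) by (simp add: numeral_2_eq_2)
  then show "\<exists>i\<in>{1..n - 1}. diff_row n (L i) = diff_row n (L (i + 1))"
    using assms(1) by (intro bexI[of _ 1]) auto
next
  assume "\<exists>i\<in>{1..n - 1}. diff_row n (L i) = diff_row n (L (i + 1))"
  then have "\<forall>k\<in>{1..n}. diff_row n (L k) = diff_row n (L 1)"
    using diff_rows_eq_if_adjacent_rows_eq[OF assms] by blast
  moreover have "0 < n" using assms(1) by simp
  ultimately show "row_product n L"
    using assms(3) row_product_if_diff_rows_eq by blast
qed

theorem mainTheorem8:
  fixes n :: nat
  assumes "n \<ge> 6" and "even n"
  shows "(\<forall>d d'. is_ext_diff_row_idist n d \<and> is_ext_diff_row_idist n d' \<and>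
            neighbors n d d' \<and> d \<noteq> d' \<longrightarrow> determined n d d') \<and>
         (\<forall>L. latin_rect n n n L \<and> rect_inner_dist n n n L = n div 2 - 1 \<longrightarrow>
            (row_product n L \<longleftrightarrow>
               (\<exists>i\<in>{1..n-1}. diff_row n (L i) = diff_row n (L (i+1)))))"
  using determined_if_neighbors[OF assms] row_product_iff_adjacent_diff_rows_eq[OF assms]
  by blast

end
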